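(* Let $X \in \mathbb{R}^{n\times p}$, $y \in \mathbb{R}^n$, $\rho > 0$ and let $k$ be a positive integer. Define \[ \nu_{\ell 0} := \min_{\beta \in \mathbb{R}^p,\ \|\beta\|_0 \le k} \ \frac{1}{2}\|X\beta - y\|_2^2 + \frac{1}{2}\rho\|\beta\|_2^2, \] \[ \nu_{PWG} := \min_{t \in \mathbb{R},\ z \in [0,1]^p} \ \frac{1}{2} t \quad \text{s.t.} \quad \begin{bmatrix} t & y^T \\ y & I_n + \frac{1}{\rho} X \mathbf{D}(z) X^T\end{bmatrix} \succeq 0,\quad e^T z \le k, \] \[ \nu_{DCL} := \min_{b \in \mathbb{R}^p,\ B \in \mathcal{S}^p,\ z \in \mathbb{R}^p} \ \frac{1}{2}\left\langle \begin{bmatrix} y^Ty & -y^TX \\ -X^Ty & \rho I_p + X^TX\end{bmatrix}, \begin{bmatrix} 1 & b^T \\ b & B\end{bmatrix}\right\rangle \] subject to $\begin{bmatrix} 1 & b^T \\ b & B\end{bmatrix} \succeq 0$, $\begin{bmatrix} z_i & b_i \\ b_i & B_{ii}\end{bmatrix} \succeq 0$ for all $i = 1,\dots,p$, and $\sum_{i=1}^p z_i \le k$. Then \[ \nu_{\ell 0} \ge \nu_{DCL} \ge \nu_{PWG}. \]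
   Context: $\|\beta\|_0$ denotes the number of nonzero entries of $\beta$. $e$ is the all-ones vector of appropriate dimension, $\mathbf{D}(z)$ is the $p\times p$ diagonal matrix with diagonal entries $z_1,\dots,z_p$, $\mathcal{S}^p$ is the space of real symmetric $p\times p$ matrices, $\succeq 0$ denotes positive semidefiniteness, and $\langle A, C\rangle = \mathrm{trace}(A^T C)$ is the trace inner product. *)

theory Defs
  imports "HOL-Analysis.Analysis"
begin

definition psd :: "real^'m^'m \<Rightarrow> bool" where
  "psd A \<longleftrightarrow> transpose A = A \<and> (\<forall>x. 0 \<le> x \<bullet> (A *v x))"

definition l0norm :: "real^'p \<Rightarrow> nat" where
  "l0norm b = card {i. b $ i \<noteq> 0}"

definition diagm :: "real^'p \<Rightarrow> real^'p^'p" where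
  "diagm z = (\<chi> i j. if i = j then z $ i else 0)"

definition tinner :: "real^'m^'m \<Rightarrow> real^'m^'m \<Rightarrow> real" where
  "tinner A C = trace (transpose A ** C)"

text \<open>Block matrix [[a, v^T],[v, M]]; the index None is the first row/column.\<close>
definition blockmat :: "real \<Rightarrow> real^'n \<Rightarrow> real^'n^'n \<Rightarrow> real^('n option)^('n option)" where
  "blockmat a v M = (\<chi> i j. case i of
      None \<Rightarrow> (case j of None \<Rightarrow> a | Some j' \<Rightarrow> v $ j')
    | Some i' \<Rightarrow> (case j of None \<Rightarrow> v $ i' | Some j' \<Rightarrow> M $ i' $ j'))"

definition nu_l0 :: "real^'p^'n \<Rightarrow> real^'n \<Rightarrow> real \<Rightarrow> nat \<Rightarrow> real" where
  "nu_l0 X y \<rho> k = Inf {(1/2) * (norm (X *v \<beta> - y))^2 + (1/2) * \<rho> * (norm \<beta>)^2 | \<beta>. l0norm \<beta> \<le> k}"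

definition nu_PWG :: "real^'p^'n \<Rightarrow> real^'n \<Rightarrow> real \<Rightarrow> nat \<Rightarrow> real" where
  "nu_PWG X y \<rho> k = Inf {(1/2) * t | t z.
      (\<forall>i. 0 \<le> z $ i \<and> z $ i \<le> 1) \<and>
      psd (blockmat t y (mat 1 + (1/\<rho>) *\<^sub>R (X ** diagm z ** transpose X))) \<and>
      (\<Sum>i\<in>UNIV. z $ i) \<le> real k}"

definition nu_DCL :: "real^'p^'n \<Rightarrow> real^'n \<Rightarrow> real \<Rightarrow> nat \<Rightarrow> real" where
  "nu_DCL X y \<rho> k = Inf {(1/2) * tinner
        (blockmat (y \<bullet> y) (- (transpose X *v y)) (\<rho> *\<^sub>R mat 1 + transpose X ** X))
        (blockmat 1 b B) | b B z.
      transpose B = B \<and>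
      psd (blockmat 1 b B) \<and>
      (\<forall>i. psd (vector [vector [z $ i, b $ i], vector [b $ i, B $ i $ i]] :: real^2^2)) \<and>
      (\<Sum>i\<in>UNIV. z $ i) \<le> real k}"

end

theory Submission imports Defs begin

text \<open>
For \<open>\<beta>\<close> with at most \<open>k\<close> nonzero entries, the rank-one lift \<open>b = \<beta>\<close>, \<open>B = \<beta>\<beta>\<^sup>T\<close>, with \<open>z\<close> the
indicator of the support of \<open>\<beta>\<close>, is feasible for the DCL relaxation with the same objective value,
so \<open>\<nu>\<^sub>D\<^sub>C\<^sub>L \<le> \<nu>\<^sub>\<ell>\<^sub>0\<close>.

Conversely, take a DCL-feasible \<open>(b, B, z)\<close>, clip \<open>z\<close> to \<open>min z 1\<close> and put
\<open>t = \<parallel>Xb - y\<parallel>\<^sup>2 + \<rho> \<Sum>\<^sub>i b\<^sub>i\<^sup>2 / z\<^sub>i\<close> (a perspective function; \<open>b\<^sub>i = 0\<close> whenever \<open>z\<^sub>i = 0\<close>, and such terms count as \<open>0\<close>).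
With \<open>r = Xb - y\<close> and \<open>u = X\<^sup>Tw\<close> the quadratic form of the PWG block matrix at \<open>(s, w)\<close> equals
\<open>\<parallel>w - s r\<parallel>\<^sup>2 + \<Sum>\<^sub>i (\<rho> s b\<^sub>i + z\<^sub>i u\<^sub>i)\<^sup>2 / (\<rho> z\<^sub>i)\<close>, so \<open>(t, min z 1)\<close> is PWG-feasible.
Finally \<open>t\<close> is at most twice the DCL objective: the \<open>2\<times>2\<close> constraints give \<open>b\<^sub>i\<^sup>2 / z\<^sub>i \<le> B\<^sub>i\<^sub>i\<close>,
and the Schur complement of \<open>[[1, b\<^sup>T], [b, B]]\<close> gives \<open>(x\<^sup>Tb)\<^sup>2 \<le> x\<^sup>TBx\<close> for every row \<open>x\<close> of \<open>X\<close>.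
\<close>

lemma sum_UNIV_option:
  "(\<Sum>i\<in>(UNIV::'a::finite option set). f i) = f None + (\<Sum>i\<in>UNIV. f (Some i))"
proof -
  have "(\<Sum>i\<in>(UNIV::'a option set). f i) = f None + sum f (range Some)"
    unfolding UNIV_option_conv by (subst sum.insert) auto
  also have "sum f (range Some) = (\<Sum>i\<in>UNIV. f (Some i))"
    by (subst sum.reindex) (auto intro: inj_Some)
  finally show ?thesis .
qed

definition vec_option :: "real \<Rightarrow> real^'n \<Rightarrow> real^('n option)" where
  "vec_option s w = (\<chi> i. case i of None \<Rightarrow> s | Some j \<Rightarrow> w $ j)"

lemma vec_option_eta: "x = vec_option (x $ None) (\<chi> i. x $ Some i)"
  unfolding vec_option_def by (simp add: vec_eq_iff split: option.splits)

lemma quadratic_form_blockmat: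
  fixes M :: "real^'n^'n"
  shows "vec_option s w \<bullet> (blockmat a v M *v vec_option s w)
    = a * s\<^sup>2 + 2 * s * (v \<bullet> w) + w \<bullet> (M *v w)"
  unfolding vec_option_def blockmat_def inner_vec_def matrix_vector_mult_def
  by (simp add: sum_UNIV_option sum.distrib sum_distrib_left algebra_simps power2_eq_square)

lemma transpose_blockmat: "transpose (blockmat a v M) = blockmat a v (transpose M)"
  unfolding blockmat_def transpose_def by (simp add: vec_eq_iff split: option.splits)

lemma psd_blockmatI:
  assumes "transpose M = M" and "\<And>s w. 0 \<le> a * s\<^sup>2 + 2 * s * (v \<bullet> w) + w \<bullet> (M *v w)"
  shows "psd (blockmat a v M)"
  unfolding psd_def
proof (intro conjI allI)
  show "transpose (blockmat a v M) = blockmat a v M"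
    using assms(1) by (simp add: transpose_blockmat)
  show "0 \<le> x \<bullet> (blockmat a v M *v x)" for x
    by (subst (1 2) vec_option_eta) (simp only: quadratic_form_blockmat assms(2))
qed

lemma psd_blockmatD:
  assumes "psd (blockmat a v M)"
  shows "0 \<le> a * s\<^sup>2 + 2 * s * (v \<bullet> w) + w \<bullet> (M *v w)"
  using assms unfolding psd_def by (metis quadratic_form_blockmat)

lemma quadratic_form_2x2:
  "(x::real^2) \<bullet> ((vector [vector [a, c], vector [c, d]] :: real^2^2) *v x)
    = a * (x$1)\<^sup>2 + 2 * c * (x$1) * (x$2) + d * (x$2)\<^sup>2"
  unfolding inner_vec_def matrix_vector_mult_def
  by (simp add: sum_2 algebra_simps power2_eq_square)

lemma binary_quadratic_nonneg_iff:
  fixes a c d :: real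
  shows "(\<forall>x1 x2. 0 \<le> a * x1\<^sup>2 + 2 * c * x1 * x2 + d * x2\<^sup>2) \<longleftrightarrow> 0 \<le> a \<and> 0 \<le> d \<and> c\<^sup>2 \<le> a * d"
proof
  assume q: "\<forall>x1 x2. 0 \<le> a * x1\<^sup>2 + 2 * c * x1 * x2 + d * x2\<^sup>2"
  have a: "0 \<le> a" and d: "0 \<le> d" using q[rule_format, of 1 0] q[rule_format, of 0 1] by simp_all
  have "0 \<le> a * (a * d - c\<^sup>2)" "0 \<le> d * (a * d - c\<^sup>2)" "0 \<le> a - 2 * c\<^sup>2 + d * c\<^sup>2"
    using q[rule_format, of "-c" a] q[rule_format, of d "-c"] q[rule_format, of 1 "-c"]
    by (simp_all add: algebra_simps power2_eq_square)
  then have "c\<^sup>2 \<le> a * d"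
    using a d by (cases "a > 0"; cases "d > 0") (auto simp: zero_le_mult_iff)
  with a d show "0 \<le> a \<and> 0 \<le> d \<and> c\<^sup>2 \<le> a * d" by simp
next
  assume coeffs: "0 \<le> a \<and> 0 \<le> d \<and> c\<^sup>2 \<le> a * d"
  show "\<forall>x1 x2. 0 \<le> a * x1\<^sup>2 + 2 * c * x1 * x2 + d * x2\<^sup>2"
  proof (intro allI)
    fix x1 x2 :: real
    show "0 \<le> a * x1\<^sup>2 + 2 * c * x1 * x2 + d * x2\<^sup>2"
    proof (cases "a > 0")
      case True
      have "a * (a * x1\<^sup>2 + 2 * c * x1 * x2 + d * x2\<^sup>2) = (a * x1 + c * x2)\<^sup>2 + (a * d - c\<^sup>2) * x2\<^sup>2"
        by (simp add: algebra_simps power2_eq_square)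
      also have "\<dots> \<ge> 0" using coeffs by simp
      finally show ?thesis using True by (simp add: zero_le_mult_iff)
    next
      case False
      then have "a = 0" "c = 0" using coeffs by auto
      then show ?thesis using coeffs by simp
    qed
  qed
qed

lemma psd_2x2_iff:
  "psd (vector [vector [a, c], vector [c, d]] :: real^2^2) \<longleftrightarrow> 0 \<le> a \<and> 0 \<le> d \<and> c\<^sup>2 \<le> a * d"
proof -
  have sym: "transpose (vector [vector [a, c], vector [c, d]] :: real^2^2) = vector [vector [a, c], vector [c, d]]"
    unfolding transpose_def by (simp add: vec_eq_iff forall_2)
  have "(\<forall>x::real^2. 0 \<le> a * (x$1)\<^sup>2 + 2 * c * (x$1) * (x$2) + d * (x$2)\<^sup>2)
      \<longleftrightarrow> (\<forall>x1 x2. 0 \<le> a * x1\<^sup>2 + 2 * c * x1 * x2 + d * x2\<^sup>2)"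
    by (metis vector_1 vector_2)
  then show ?thesis
    unfolding psd_def quadratic_form_2x2 binary_quadratic_nonneg_iff using sym by simp
qed

lemma scaleR_matrix_vector_mult: "((c::real) *\<^sub>R A) *v x = c *\<^sub>R (A *v (x::real^_))"
  by (simp add: vec_eq_iff matrix_vector_mult_def sum_distrib_left mult.assoc)

lemma diagm_mult: "diagm z *v u = (\<chi> i. z$i * u$i)"
  unfolding diagm_def matrix_vector_mult_def
  by (simp add: vec_eq_iff if_distrib[of "\<lambda>x. x * _"] cong: if_cong)

lemma transpose_diagm: "transpose (diagm z) = diagm z"
  unfolding diagm_def transpose_def by (simp add: vec_eq_iff)

lemma transpose_matrix_add: "transpose (A + B) = transpose A + transpose (B::real^'n^'m)"
  unfolding transpose_def by (simp add: vec_eq_iff)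

lemma quadratic_form_weighted_gram:
  fixes X :: "real^'p^'n"
  shows "w \<bullet> ((X ** diagm z ** transpose X) *v w) = (\<Sum>i\<in>UNIV. z$i * ((transpose X *v w)$i)\<^sup>2)"
proof -
  have "w \<bullet> ((X ** diagm z ** transpose X) *v w) = w \<bullet> (X *v (diagm z *v (transpose X *v w)))"
    by (simp only: matrix_vector_mul_assoc matrix_mul_assoc)
  also have "\<dots> = (transpose X *v w) \<bullet> (diagm z *v (transpose X *v w))"
    by (simp add: dot_lmul_matrix)
  also have "\<dots> = (\<Sum>i\<in>UNIV. z$i * ((transpose X *v w)$i)\<^sup>2)"
    unfolding diagm_mult inner_vec_def by (simp add: power2_eq_square mult_ac)
  finally show ?thesis .
qed

lemma quadratic_form_rank_one: "w \<bullet> ((\<chi> i j. \<beta>$i * \<beta>$j) *v w) = (\<beta> \<bullet> (w::real^'p))\<^sup>2"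
  by (simp add: inner_vec_def matrix_vector_mult_def power2_eq_square sum_product
      sum_distrib_left mult_ac)

lemma norm_residual_sq:
  fixes X :: "real^'p^'n"
  shows "(norm (X *v b - y))\<^sup>2 = y \<bullet> y - 2 * ((transpose X *v y) \<bullet> b) + (\<Sum>m\<in>UNIV. (X$m \<bullet> b)\<^sup>2)"
proof -
  have "(X *v b) \<bullet> y = (transpose X *v y) \<bullet> b"
    using dot_lmul_matrix[of y X b] by (simp add: inner_commute)
  moreover have "(X *v b) \<bullet> (X *v b) = (\<Sum>m\<in>UNIV. (X$m \<bullet> b)\<^sup>2)"
    by (simp add: inner_vec_def matrix_vector_mul_component power2_eq_square)
  moreover have "(X *v b - y) \<bullet> (X *v b - y) = (X *v b) \<bullet> (X *v b) - 2 * ((X *v b) \<bullet> y) + y \<bullet> y"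
    by (simp add: inner_diff_left inner_diff_right inner_commute[of y "X *v b"])
  ultimately show ?thesis unfolding power2_norm_eq_inner by simp
qed

lemma tinner_blockmat:
  fixes M N :: "real^'n^'n"
  shows "tinner (blockmat a v M) (blockmat c w N)
    = a * c + 2 * (v \<bullet> w) + (\<Sum>i\<in>UNIV. \<Sum>j\<in>UNIV. M$i$j * N$i$j)"
  unfolding tinner_def trace_def matrix_matrix_mult_def transpose_def blockmat_def inner_vec_def
  by (simp add: sum_UNIV_option sum.distrib) (rule sum.swap)

lemma frobenius_gram:
  fixes X :: "real^'p^'n" and B :: "real^'p^'p"
  shows "(\<Sum>i\<in>UNIV. \<Sum>j\<in>UNIV. (transpose X ** X)$i$j * B$i$j) = (\<Sum>m\<in>UNIV. X$m \<bullet> (B *v X$m))"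
proof -
  have "(\<Sum>i\<in>UNIV. \<Sum>j\<in>UNIV. (transpose X ** X)$i$j * B$i$j)
     = (\<Sum>i\<in>UNIV. \<Sum>j\<in>UNIV. \<Sum>m\<in>UNIV. X$m$i * X$m$j * B$i$j)"
    by (simp add: matrix_matrix_mult_def transpose_def sum_distrib_right)
  also have "\<dots> = (\<Sum>i\<in>UNIV. \<Sum>m\<in>UNIV. \<Sum>j\<in>UNIV. X$m$i * X$m$j * B$i$j)"
    by (rule sum.cong[OF refl], rule sum.swap)
  also have "\<dots> = (\<Sum>m\<in>UNIV. \<Sum>i\<in>UNIV. \<Sum>j\<in>UNIV. X$m$i * X$m$j * B$i$j)"
    by (rule sum.swap)
  also have "\<dots> = (\<Sum>m\<in>UNIV. X$m \<bullet> (B *v X$m))"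
    unfolding inner_vec_def matrix_vector_mult_def by (simp add: sum_distrib_left mult_ac)
  finally show ?thesis .
qed

definition dcl_objective :: "real^'p^'n \<Rightarrow> real^'n \<Rightarrow> real \<Rightarrow> real^'p \<Rightarrow> real^'p^'p \<Rightarrow> real" where
  "dcl_objective X y \<rho> b B = (1/2) * tinner
      (blockmat (y \<bullet> y) (- (transpose X *v y)) (\<rho> *\<^sub>R mat 1 + transpose X ** X)) (blockmat 1 b B)"

lemma dcl_objective_eq:
  fixes X :: "real^'p^'n"
  shows "dcl_objective X y \<rho> b B = (1/2) * (y \<bullet> y - 2 * ((transpose X *v y) \<bullet> b)
      + \<rho> * (\<Sum>i\<in>UNIV. B$i$i) + (\<Sum>m\<in>UNIV. X$m \<bullet> (B *v X$m)))"
proof -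
  have "(\<Sum>i\<in>UNIV. \<Sum>j\<in>UNIV. (\<rho> *\<^sub>R mat 1 + transpose X ** X)$i$j * B$i$j)
     = (\<Sum>i\<in>UNIV. \<Sum>j\<in>UNIV. (if i = j then \<rho> * B$i$j else 0))
       + (\<Sum>i\<in>UNIV. \<Sum>j\<in>UNIV. (transpose X ** X)$i$j * B$i$j)"
    by (simp add: mat_def distrib_right sum.distrib if_distrib[of "\<lambda>x. x * _"]
        if_distrib[of "\<lambda>x. _ * x"] cong: if_cong)
  also have "\<dots> = \<rho> * (\<Sum>i\<in>UNIV. B$i$i) + (\<Sum>m\<in>UNIV. X$m \<bullet> (B *v X$m))"
    by (simp add: sum_distrib_left frobenius_gram)
  finally show ?thesis
    unfolding dcl_objective_def tinner_blockmat by (simp add: inner_minus_left)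
qed

lemma dcl_objective_rank_one:
  fixes X :: "real^'p^'n"
  shows "dcl_objective X y \<rho> \<beta> (\<chi> i j. \<beta>$i * \<beta>$j)
    = (1/2) * (norm (X *v \<beta> - y))\<^sup>2 + (1/2) * \<rho> * (norm \<beta>)\<^sup>2"
proof -
  have "(\<Sum>i\<in>UNIV. (\<chi> i j. \<beta>$i * \<beta>$j)$i$i) = (norm \<beta>)\<^sup>2"
    unfolding power2_norm_eq_inner inner_vec_def by simp
  moreover have "(\<Sum>m\<in>UNIV. X$m \<bullet> ((\<chi> i j. \<beta>$i * \<beta>$j) *v X$m)) = (\<Sum>m\<in>UNIV. (X$m \<bullet> \<beta>)\<^sup>2)"
    unfolding quadratic_form_rank_one by (simp add: inner_commute)
  ultimately show ?thesis
    unfolding dcl_objective_eq norm_residual_sq by (simp add: algebra_simps)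
qed

lemma perspective_term_nonneg:
  fixes \<rho> z b u s :: real
  assumes "\<rho> > 0" "0 \<le> z" "z = 0 \<Longrightarrow> b = 0"
  shows "0 \<le> \<rho> * s\<^sup>2 * (if z = 0 then 0 else b\<^sup>2 / z) + 2 * s * b * u + (1/\<rho>) * z * u\<^sup>2"
proof (cases "z = 0")
  case True then show ?thesis using assms by simp
next
  case False
  then have "\<rho> * s\<^sup>2 * (if z = 0 then 0 else b\<^sup>2 / z) + 2 * s * b * u + (1/\<rho>) * z * u\<^sup>2
      = (\<rho> * s * b + z * u)\<^sup>2 / (\<rho> * z)"
    using assms(1) by (simp add: field_simps power2_eq_square)
  also have "\<dots> \<ge> 0" using assms(1,2) by simp
  finally show ?thesis .
qed

lemma psd_PWG_perspective:
  fixes X :: "real^'p^'n"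
  assumes rho: "\<rho> > 0" and z_nonneg: "\<And>i. 0 \<le> z$i" and support: "\<And>i. z$i = 0 \<Longrightarrow> b$i = 0"
  shows "psd (blockmat ((norm (X *v b - y))\<^sup>2 + \<rho> * (\<Sum>i\<in>UNIV. if z$i = 0 then 0 else (b$i)\<^sup>2 / z$i))
      y (mat 1 + (1/\<rho>) *\<^sub>R (X ** diagm z ** transpose X)))"
    (is "psd (blockmat ?t y ?M)")
proof (rule psd_blockmatI)
  show "transpose ?M = ?M"
    by (simp add: transpose_matrix_add transpose_scalar matrix_transpose_mul transpose_diagm
        matrix_mul_assoc)
next
  fix s :: real and w :: "real^'n"
  define r where "r = X *v b - y"
  define u where "u = transpose X *v w"
  define q where "q = (\<lambda>i. if z$i = 0 then 0 else (b$i)\<^sup>2 / z$i)"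
  have yw: "y \<bullet> w = u \<bullet> b - r \<bullet> w"
    unfolding r_def u_def using dot_lmul_matrix[of w X b]
    by (simp add: inner_diff_left inner_commute[of "X *v b" w] inner_commute[of y w])
  have ub: "u \<bullet> b = (\<Sum>i\<in>UNIV. b$i * u$i)"
    by (simp add: inner_vec_def mult.commute)
  have shift: "(w - s *\<^sub>R r) \<bullet> (w - s *\<^sub>R r) = w \<bullet> w - 2 * s * (r \<bullet> w) + s\<^sup>2 * (r \<bullet> r)"
    by (simp add: inner_diff_left inner_diff_right inner_commute[of r w] power2_eq_square
        algebra_simps)
  have t: "?t = r \<bullet> r + \<rho> * (\<Sum>i\<in>UNIV. q i)"
    unfolding r_def q_def power2_norm_eq_inner ..
  have Mw: "w \<bullet> (?M *v w) = w \<bullet> w + (1/\<rho>) * (\<Sum>i\<in>UNIV. z$i * (u$i)\<^sup>2)"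
    unfolding u_def quadratic_form_weighted_gram[symmetric]
    by (simp add: matrix_vector_mult_add_rdistrib scaleR_matrix_vector_mult inner_add_right)
  have sums: "(\<Sum>i\<in>UNIV. \<rho> * s\<^sup>2 * q i + 2 * s * b$i * u$i + (1/\<rho>) * z$i * (u$i)\<^sup>2)
     = \<rho> * s\<^sup>2 * (\<Sum>i\<in>UNIV. q i) + 2 * s * (\<Sum>i\<in>UNIV. b$i * u$i)
       + (1/\<rho>) * (\<Sum>i\<in>UNIV. z$i * (u$i)\<^sup>2)"
    by (simp add: sum.distrib sum_distrib_left mult.assoc)
  have "?t * s\<^sup>2 + 2 * s * (y \<bullet> w) + w \<bullet> (?M *v w)
     = (w - s *\<^sub>R r) \<bullet> (w - s *\<^sub>R r)
       + (\<Sum>i\<in>UNIV. \<rho> * s\<^sup>2 * q i + 2 * s * b$i * u$i + (1/\<rho>) * z$i * (u$i)\<^sup>2)"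
    unfolding yw ub shift t Mw sums by algebra
  moreover have "0 \<le> (\<Sum>i\<in>UNIV. \<rho> * s\<^sup>2 * q i + 2 * s * b$i * u$i + (1/\<rho>) * z$i * (u$i)\<^sup>2)"
    unfolding q_def by (rule sum_nonneg) (rule perspective_term_nonneg[OF rho z_nonneg support])
  ultimately show "0 \<le> ?t * s\<^sup>2 + 2 * s * (y \<bullet> w) + w \<bullet> (?M *v w)"
    by simp
qed

lemma psd_blockmat_one_quadratic_bound:
  assumes "psd (blockmat 1 b B)"
  shows "(x \<bullet> b)\<^sup>2 \<le> x \<bullet> (B *v x)"
  using psd_blockmatD[OF assms, of "- (b \<bullet> x)" x]
  by (simp add: power2_eq_square inner_commute)

lemma perspective_clipped_le:
  fixes z b c :: real
  assumes "0 \<le> z" "b\<^sup>2 \<le> z * c" "b\<^sup>2 \<le> c"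
  shows "(if min z 1 = 0 then 0 else b\<^sup>2 / min z 1) \<le> c"
proof (cases "z \<le> 1")
  case True
  then show ?thesis
    using assms by (cases "z = 0") (auto simp: divide_le_eq mult.commute order_trans[OF _ assms(3)])
next
  case False
  then show ?thesis using assms(3) by simp
qed

lemma PWG_point_le_dcl_objective:
  fixes X :: "real^'p^'n" and B :: "real^'p^'p"
  assumes rho: "\<rho> > 0"
    and lift: "psd (blockmat 1 b B)"
    and link: "\<forall>i. psd (vector [vector [z $ i, b $ i], vector [b $ i, B $ i $ i]] :: real^2^2)"
    and budget: "(\<Sum>i\<in>UNIV. z $ i) \<le> real k"
  shows "\<exists>t z'. (\<forall>i. 0 \<le> z' $ i \<and> z' $ i \<le> 1) \<and>
      psd (blockmat t y (mat 1 + (1/\<rho>) *\<^sub>R (X ** diagm z' ** transpose X))) \<and>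
      (\<Sum>i\<in>UNIV. z' $ i) \<le> real k \<and> (1/2) * t \<le> dcl_objective X y \<rho> b B"
proof -
  have z_nonneg: "0 \<le> z$i" and link_ineq: "(b$i)\<^sup>2 \<le> z$i * B$i$i" for i
    using link unfolding psd_2x2_iff by auto
  have diag: "(b$i)\<^sup>2 \<le> B$i$i" for i
    using psd_blockmat_one_quadratic_bound[OF lift, of "axis i 1"]
    by (simp add: inner_axis' matrix_vector_mult_basis column_def inner_axis)
  \<comment> \<open>DCL does not bound \<open>z\<close> by \<open>1\<close>, PWG does; clipping keeps the \<open>2\<times>2\<close> bounds.\<close>
  define z' where "z' = (\<chi> i. min (z$i) 1)"
  define t where "t = (norm (X *v b - y))\<^sup>2 + \<rho> * (\<Sum>i\<in>UNIV. if z'$i = 0 then 0 else (b$i)\<^sup>2 / z'$i)"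
  have z'_bounds: "0 \<le> z'$i \<and> z'$i \<le> 1" for i
    unfolding z'_def using z_nonneg by auto
  have support: "z'$i = 0 \<Longrightarrow> b$i = 0" for i
    using link_ineq[of i] z_nonneg[of i] unfolding z'_def by (auto simp: min_def split: if_splits)
  have "(\<Sum>i\<in>UNIV. if z'$i = 0 then 0 else (b$i)\<^sup>2 / z'$i) \<le> (\<Sum>i\<in>UNIV. B$i$i)"
    unfolding z'_def vec_lambda_beta by (intro sum_mono perspective_clipped_le z_nonneg link_ineq diag)
  then have "\<rho> * (\<Sum>i\<in>UNIV. if z'$i = 0 then 0 else (b$i)\<^sup>2 / z'$i) \<le> \<rho> * (\<Sum>i\<in>UNIV. B$i$i)"
    using rho by simp
  moreover have "(\<Sum>m\<in>UNIV. (X$m \<bullet> b)\<^sup>2) \<le> (\<Sum>m\<in>UNIV. X$m \<bullet> (B *v X$m))"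
    by (intro sum_mono psd_blockmat_one_quadratic_bound[OF lift])
  ultimately have "t \<le> y \<bullet> y - 2 * ((transpose X *v y) \<bullet> b)
      + \<rho> * (\<Sum>i\<in>UNIV. B$i$i) + (\<Sum>m\<in>UNIV. X$m \<bullet> (B *v X$m))"
    unfolding t_def norm_residual_sq by linarith
  then have "(1/2) * t \<le> dcl_objective X y \<rho> b B"
    unfolding dcl_objective_eq by (rule mult_left_mono) simp
  moreover have "(\<Sum>i\<in>UNIV. z' $ i) \<le> real k"
    using budget sum_mono[of UNIV "\<lambda>i. z'$i" "\<lambda>i. z$i"] unfolding z'_def by simp
  moreover have "psd (blockmat t y (mat 1 + (1/\<rho>) *\<^sub>R (X ** diagm z' ** transpose X)))"
    unfolding t_def using psd_PWG_perspective[OF rho] z'_bounds support by blast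
  ultimately show ?thesis using z'_bounds by blast
qed

lemma psd_blockmat_corner_nonneg: "psd (blockmat t y M) \<Longrightarrow> 0 \<le> t"
  using psd_blockmatD[of t y M 1 0] by simp

lemma nu_PWG_le_dcl_objective:
  fixes X :: "real^'p^'n" and B :: "real^'p^'p"
  assumes "\<rho> > 0"
    and "psd (blockmat 1 b B)"
    and "\<forall>i. psd (vector [vector [z $ i, b $ i], vector [b $ i, B $ i $ i]] :: real^2^2)"
    and "(\<Sum>i\<in>UNIV. z $ i) \<le> real k"
  shows "nu_PWG X y \<rho> k \<le> dcl_objective X y \<rho> b B"
proof -
  obtain t z' where "(\<forall>i. 0 \<le> z' $ i \<and> z' $ i \<le> 1)"
      and psd_t: "psd (blockmat t y (mat 1 + (1/\<rho>) *\<^sub>R (X ** diagm z' ** transpose X)))"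
      and "(\<Sum>i\<in>UNIV. z' $ i) \<le> real k" and le: "(1/2) * t \<le> dcl_objective X y \<rho> b B"
    using PWG_point_le_dcl_objective[OF assms] by blast
  then have "nu_PWG X y \<rho> k \<le> (1/2) * t"
    unfolding nu_PWG_def
    by (intro cInf_lower bdd_belowI[where m = 0])
       (auto dest: psd_blockmat_corner_nonneg)
  with le show ?thesis by simp
qed

lemma nu_DCL_eq:
  "nu_DCL X y \<rho> k = Inf {dcl_objective X y \<rho> b B | b B z.
      transpose B = B \<and> psd (blockmat 1 b B) \<and>
      (\<forall>i. psd (vector [vector [z $ i, b $ i], vector [b $ i, B $ i $ i]] :: real^2^2)) \<and>
      (\<Sum>i\<in>UNIV. z $ i) \<le> real k}"
  unfolding nu_DCL_def dcl_objective_def ..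

lemma nu_PWG_le_nu_DCL:
  assumes "\<rho> > 0"
  shows "nu_PWG X y \<rho> k \<le> nu_DCL X y \<rho> k"
  unfolding nu_DCL_eq
proof (rule cInf_greatest)
  have "psd (blockmat 1 0 (0::real^'p^'p))"
    by (rule psd_blockmatI) (auto simp: transpose_def vec_eq_iff)
  then show "{dcl_objective X y \<rho> b B | b B z.
      transpose B = B \<and> psd (blockmat 1 b B) \<and>
      (\<forall>i. psd (vector [vector [z $ i, b $ i], vector [b $ i, B $ i $ i]] :: real^2^2)) \<and>
      (\<Sum>i\<in>UNIV. z $ i) \<le> real k} \<noteq> {}"
    by (auto simp: psd_2x2_iff transpose_def vec_eq_iff intro!: exI[of _ "0::real^'p"])
qed (auto intro: nu_PWG_le_dcl_objective[OF assms])

lemma dcl_feasible_rank_one_lift: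
  fixes \<beta> :: "real^'p"
  assumes "l0norm \<beta> \<le> k"
  defines "B \<equiv> \<chi> i j. \<beta>$i * \<beta>$j" and "z \<equiv> \<chi> i. if \<beta>$i = 0 then 0 else 1"
  shows "transpose B = B \<and> psd (blockmat 1 \<beta> B) \<and>
      (\<forall>i. psd (vector [vector [z $ i, \<beta> $ i], vector [\<beta> $ i, B $ i $ i]] :: real^2^2)) \<and>
      (\<Sum>i\<in>UNIV. z $ i) \<le> real k"
proof (intro conjI)
  show sym: "transpose B = B"
    unfolding B_def transpose_def by (simp add: vec_eq_iff mult.commute)
  show "psd (blockmat 1 \<beta> B)"
  proof (rule psd_blockmatI[OF sym])
    fix s w
    have "1 * s\<^sup>2 + 2 * s * (\<beta> \<bullet> w) + w \<bullet> (B *v w) = (s + \<beta> \<bullet> w)\<^sup>2"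
      unfolding B_def quadratic_form_rank_one by (simp add: power2_eq_square algebra_simps)
    then show "0 \<le> 1 * s\<^sup>2 + 2 * s * (\<beta> \<bullet> w) + w \<bullet> (B *v w)" by simp
  qed
  show "\<forall>i. psd (vector [vector [z $ i, \<beta> $ i], vector [\<beta> $ i, B $ i $ i]] :: real^2^2)"
    by (simp add: psd_2x2_iff z_def B_def power2_eq_square)
  have "(\<Sum>i\<in>UNIV. z $ i) = real (l0norm \<beta>)"
    unfolding z_def l0norm_def by (simp add: sum.If_cases Collect_neg_eq)
  with assms(1) show "(\<Sum>i\<in>UNIV. z $ i) \<le> real k" by simp
qed

lemma nu_DCL_le_nu_l0:
  assumes "\<rho> > 0"
  shows "nu_DCL X y \<rho> k \<le> nu_l0 X y \<rho> k"
  unfolding nu_l0_def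
proof (rule cInf_greatest)
  have "l0norm (0::real^'p) \<le> k"
    unfolding l0norm_def by simp
  then show "{(1/2) * (norm (X *v \<beta> - y))\<^sup>2 + (1/2) * \<rho> * (norm \<beta>)\<^sup>2 | \<beta>. l0norm \<beta> \<le> k} \<noteq> {}"
    by blast
next
  fix v
  assume "v \<in> {(1/2) * (norm (X *v \<beta> - y))\<^sup>2 + (1/2) * \<rho> * (norm \<beta>)\<^sup>2 | \<beta>. l0norm \<beta> \<le> k}"
  then obtain \<beta> where v: "v = dcl_objective X y \<rho> \<beta> (\<chi> i j. \<beta>$i * \<beta>$j)"
      and l0: "l0norm \<beta> \<le> k"
    by (auto simp: dcl_objective_rank_one)
  show "nu_DCL X y \<rho> k \<le> v"
    unfolding nu_DCL_eq v
    using dcl_feasible_rank_one_lift[OF l0]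
    by (intro cInf_lower bdd_belowI[where m = "nu_PWG X y \<rho> k"])
       (blast, auto intro: nu_PWG_le_dcl_objective[OF assms])
qed

theorem proposition1:
  fixes X :: "real^'p^'n" and y :: "real^'n" and \<rho> :: real and k :: nat
  assumes "\<rho> > 0" and "k \<ge> 1"
  shows "nu_l0 X y \<rho> k \<ge> nu_DCL X y \<rho> k \<and> nu_DCL X y \<rho> k \<ge> nu_PWG X y \<rho> k"
  using assms(1) by (simp add: nu_DCL_le_nu_l0 nu_PWG_le_nu_DCL)

end
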